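(* Let $g_1,\dots,g_r\in\mathbb R[X_1,\dots,X_n]$ satisfy $1-\|\mathbf X\|_2^2\in\mathcal Q(\mathbf g)$ and $\|g_i\|\le\tfrac12$, with $S=\mathcal S(\mathbf g)\neq\emptyset$. Let $f\in\mathbb R[\mathbf X]$ of degree $d$ with $f^*=\min_{x\in S}f(x)>0$, and assume there exists $x\in[-1,1]^n\setminus S$ with $f(x)\le0$. Let $A=\{x\in[-1,1]^n: f(x)\le \tfrac{3f^*}{4}\}$. Then $d_H(A,S)\ge\dfrac{\epsilon(f)}{8d^2}$.
   Context: $\Sigma^2$ sums of squares, $\mathcal S(\mathbf g)=\{x:g_i(x)\ge0\ \forall i\}$, $\mathcal Q(\mathbf g)=\Sigma^2+\sum_i\Sigma^2g_i$, $\|h\|=\max_{[-1,1]^n}|h|$, $\|\mathbf X\|_2^2=\sum X_i^2$, $\epsilon(f)=f^*/\|f\|$. $d_H(A,B)=\max\{\sup_{a\in A}\operatorname{dist}(a,B),\sup_{b\in B}\operatorname{dist}(b,A)\}$ is the Hausdorff distance (Euclidean). *)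

theory Defs
  imports "HOL-Analysis.Analysis"
begin

text \<open>Multivariate real polynomials in n variables, rendered as polynomial functions on
  real^'n (the index type 'n is finite, so n = CARD('n)). A monomial is an exponent
  vector alpha :: 'n => nat.\<close>

definition monom_eval :: "('n::finite \<Rightarrow> nat) \<Rightarrow> real^'n \<Rightarrow> real" where
  "monom_eval \<alpha> x = (\<Prod>i\<in>UNIV. (x $ i) ^ (\<alpha> i))"

definition poly_fun_deg_le :: "(real^'n::finite \<Rightarrow> real) \<Rightarrow> nat \<Rightarrow> bool" where
  "poly_fun_deg_le f d \<longleftrightarrow>
     (\<exists>c :: ('n \<Rightarrow> nat) \<Rightarrow> real. finite {\<alpha>. c \<alpha> \<noteq> 0}
        \<and> (\<forall>\<alpha>. c \<alpha> \<noteq> 0 \<longrightarrow> sum \<alpha> UNIV \<le> d)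
        \<and> (\<forall>x. f x = (\<Sum>\<alpha>\<in>{\<alpha>. c \<alpha> \<noteq> 0}. c \<alpha> * monom_eval \<alpha> x)))"

definition is_poly :: "(real^'n::finite \<Rightarrow> real) \<Rightarrow> bool" where
  "is_poly f \<longleftrightarrow> (\<exists>d. poly_fun_deg_le f d)"

text \<open>Total degree (the coefficients of a real polynomial are determined by its function).\<close>
definition poly_degree :: "(real^'n::finite \<Rightarrow> real) \<Rightarrow> nat" where
  "poly_degree f = (LEAST d. poly_fun_deg_le f d)"

definition is_sos :: "(real^'n::finite \<Rightarrow> real) \<Rightarrow> bool" where
  "is_sos s \<longleftrightarrow> (\<exists>ps :: (real^'n \<Rightarrow> real) list.
      (\<forall>p\<in>set ps. is_poly p) \<and> (\<forall>x. s x = (\<Sum>p\<leftarrow>ps. (p x)^2)))"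

text \<open>Quadratic module Q(g) generated by g_1..g_r (polynomial identity = identity of functions).\<close>
definition in_qmodule :: "(nat \<Rightarrow> real^'n::finite \<Rightarrow> real) \<Rightarrow> nat \<Rightarrow> (real^'n \<Rightarrow> real) \<Rightarrow> bool" where
  "in_qmodule g r h \<longleftrightarrow> (\<exists>\<sigma> :: nat \<Rightarrow> real^'n \<Rightarrow> real. (\<forall>i\<in>{0..r}. is_sos (\<sigma> i))
      \<and> (\<forall>x. h x = \<sigma> 0 x + (\<Sum>i=1..r. \<sigma> i x * g i x)))"

definition semialg :: "(nat \<Rightarrow> real^'n::finite \<Rightarrow> real) \<Rightarrow> nat \<Rightarrow> (real^'n) set" where
  "semialg g r = {x. \<forall>i\<in>{1..r}. g i x \<ge> 0}"

definition cube :: "(real^'n::finite) set" where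
  "cube = {x. \<forall>i. \<bar>x $ i\<bar> \<le> 1}"

definition supnorm :: "(real^'n::finite \<Rightarrow> real) \<Rightarrow> real" where
  "supnorm h = (SUP x\<in>cube. \<bar>h x\<bar>)"

definition hausdorff_dist :: "('a::metric_space) set \<Rightarrow> 'a set \<Rightarrow> real" where
  "hausdorff_dist A B = max (SUP a\<in>A. infdist a B) (SUP b\<in>B. infdist b A)"

end

(*
  Let x0 be a point of the cube outside S with f x0 <= 0; it lies in A.  For s in S we have
  f* <= f s - f x0 <= L * dist x0 s with L = 8 d^2 ||f|| a Lipschitz constant of f on the cube,
  so dist(x0, S) >= f*/L.  The certificate 1 - |x|^2 in Q(g) puts S into the unit ball, hence
  into the cube.

  The Lipschitz constant comes from a Markov inequality at an endpoint: deg P <= d and |P| <= B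
  on [0,1] give |P'(0)| <= 8 d^2 B, applied to f along segments inside the cube.  For it, the
  polynomial R = (P - P 0)/X, with R 0 = P'(0) and |R s| <= 2B/s, is interpolated at the nodes
  j^2/d^2 (j = 1..d): the Lagrange weights at 0 have modulus 2 (d!)^2/((d-j)! (d+j)!) <= 2,
  and sum_j 1/j^2 < 2.
*)
theory Submission
  imports Defs "HOL-Computational_Algebra.Polynomial"
begin

lemma lagrange_interpolation:
  fixes Q :: "'a::field poly" and t :: "'b \<Rightarrow> 'a"
  assumes "finite N" and "inj_on t N" and "degree Q < card N"
  shows "poly Q z = (\<Sum>j\<in>N. poly Q (t j) * (\<Prod>k\<in>N-{j}. (z - t k) / (t j - t k)))"
proof -
  define L where
    "L = (\<Sum>j\<in>N. smult (poly Q (t j)) (\<Prod>k\<in>N-{j}. smult (1 / (t j - t k)) [:- t k, 1:]))"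
  have poly_L: "poly L y = (\<Sum>j\<in>N. poly Q (t j) * (\<Prod>k\<in>N-{j}. (y - t k) / (t j - t k)))" for y
    by (simp add: L_def poly_sum poly_prod diff_divide_distrib)
  have "degree L \<le> card N - 1"
    unfolding L_def
  proof (intro degree_sum_le assms(1))
    fix j assume "j \<in> N"
    have "degree (\<Prod>k\<in>N-{j}. smult (1 / (t j - t k)) [:- t k, 1:]) \<le> (\<Sum>k\<in>N-{j}. 1)"
      by (rule order_trans[OF degree_prod_sum_le sum_mono])
        (use assms(1) in \<open>auto intro: order_trans[OF degree_smult_le]\<close>)
    also have "\<dots> = card N - 1"
      using \<open>j \<in> N\<close> assms(1) by simp
    finally show "degree (smult (poly Q (t j)) (\<Prod>k\<in>N-{j}. smult (1 / (t j - t k)) [:- t k, 1:]))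
        \<le> card N - 1"
      by (rule order_trans[OF degree_smult_le])
  qed
  then have "degree L < card (t ` N)"
    using assms by (simp add: card_image)
  moreover have "poly Q y = poly L y" if "y \<in> t ` N" for y
  proof -
    from that obtain i where i: "i \<in> N" "y = t i" by auto
    have "poly Q (t j) * (\<Prod>k\<in>N-{j}. (t i - t k) / (t j - t k))
        = (if j = i then poly Q (t i) else 0)" if "j \<in> N" for j
      using i that assms(1,2) by (auto intro: prod_zero simp: inj_on_eq_iff)
    then have "poly L y = (\<Sum>j\<in>N. if j = i then poly Q (t i) else 0)"
      unfolding poly_L i(2) by (rule sum.cong[OF refl])
    then show ?thesis
      using i assms(1) by simp
  qed
  ultimately have "Q = L"
    using assms(3) by (intro poly_eqI_degree[of "t ` N"]) (auto simp: card_image[OF assms(2)])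
  then show ?thesis
    unfolding poly_L[symmetric] by simp
qed

lemma sum_inverse_squares_le: "1 \<le> d \<Longrightarrow> (\<Sum>j=1..d. 1 / real j ^ 2) \<le> 2 - 1 / real d"
proof (induction d rule: nat_induct_at_least)
  case base
  show ?case by simp
next
  case (Suc d)
  have "1 / (real d + 1) ^ 2 \<le> 1 / (real d * (real d + 1))"
    using Suc.hyps by (intro divide_left_mono) (auto simp: power2_eq_square)
  also have "\<dots> = 1 / real d - 1 / (real d + 1)"
    using Suc.hyps by (simp add: field_simps)
  finally show ?case
    using Suc.IH by (simp add: add.commute)
qed

lemma fact_sq_le_fact_mult_fact:
  assumes "j \<le> d"
  shows "fact d * fact d \<le> (fact (d - j) * fact (d + j) :: nat)"
proof -
  define c where "c = (2 * d) choose d"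
  have "fact d * fact d * c = fact (d + j) * fact (d - j) * ((2 * d) choose (d + j))"
    using binomial_fact_lemma[of d "2 * d"] binomial_fact_lemma[of "d + j" "2 * d"] assms
    by (simp add: c_def mult_2)
  also have "\<dots> \<le> fact (d + j) * fact (d - j) * c"
    unfolding c_def by (intro mult_left_mono binomial_maximum') simp
  finally show ?thesis
    by (simp add: c_def mult.commute)
qed

lemma prod_add_atLeastAtMost_mult_fact:
  "(\<Prod>k\<in>{1..d}. real j + real k) * fact j = fact (d + j)"
proof (induction d)
  case 0
  show ?case by simp
next
  case (Suc d)
  have "(\<Prod>k\<in>{1..Suc d}. real j + real k) * fact j
      = (real j + real (Suc d)) * ((\<Prod>k\<in>{1..d}. real j + real k) * fact j)"
    by (simp add: mult_ac)
  also have "\<dots> = (real j + real (Suc d)) * fact (d + j)"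
    by (simp only: Suc.IH)
  also have "\<dots> = fact (Suc d + j)"
    by (simp add: algebra_simps)
  finally show ?case .
qed

lemma prod_abs_diff_atLeastAtMost_minus:
  assumes "j \<in> {1..d}"
  shows "(\<Prod>k\<in>{1..d}-{j}. \<bar>real j - real k\<bar>) = fact (j - 1) * fact (d - j)"
proof -
  have fact_real: "(\<Prod>i\<in>{1..n}. real i) = fact n" for n
    by (simp add: fact_prod)
  have "{1..d}-{j} = {1..j-1} \<union> {j<..d}"
    using assms by auto
  then have "(\<Prod>k\<in>{1..d}-{j}. \<bar>real j - real k\<bar>)
      = (\<Prod>k\<in>{1..j-1} \<union> {j<..d}. \<bar>real j - real k\<bar>)"
    by (rule arg_cong)
  also have "\<dots> = (\<Prod>k\<in>{1..j-1}. \<bar>real j - real k\<bar>) * (\<Prod>k\<in>{j<..d}. \<bar>real j - real k\<bar>)"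
    by (rule prod.union_disjoint) auto
  also have "(\<Prod>k\<in>{1..j-1}. \<bar>real j - real k\<bar>) = (\<Prod>i\<in>{1..j-1}. real i)"
    by (rule prod.reindex_bij_witness[of _ "\<lambda>i. j - i" "\<lambda>k. j - k"]) (auto simp: of_nat_diff)
  also have "(\<Prod>k\<in>{j<..d}. \<bar>real j - real k\<bar>) = (\<Prod>i\<in>{1..d-j}. real i)"
    by (rule prod.reindex_bij_witness[of _ "\<lambda>i. i + j" "\<lambda>k. k - j"]) auto
  finally show ?thesis
    by (simp only: fact_real)
qed

lemma prod_square_div_abs_diff_squares:
  assumes j: "j \<in> {1..d}"
  shows "(\<Prod>k\<in>{1..d}-{j}. real k ^ 2 / \<bar>real j ^ 2 - real k ^ 2\<bar>)
           = 2 * fact d ^ 2 / (fact (d - j) * fact (d + j))"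
proof -
  define A where "A = (\<Prod>k\<in>{1..d}-{j}. real k)"
  define C where "C = (\<Prod>k\<in>{1..d}-{j}. real j + real k)"
  have remove_j: "(\<Prod>k\<in>{1..d}. h k) = h j * (\<Prod>k\<in>{1..d}-{j}. h k)" for h :: "nat \<Rightarrow> real"
    using j by (intro prod.remove) auto
  have "fact d = (\<Prod>k\<in>{1..d}. real k)"
    by (simp add: fact_prod)
  then have fact_d: "fact d = real j * A"
    unfolding A_def by (simp only: remove_j)
  have "fact (d + j) = (\<Prod>k\<in>{1..d}. real j + real k) * fact j"
    by (rule prod_add_atLeastAtMost_mult_fact[symmetric])
  also have "fact j = real j * fact (j - 1)"
    using j by (cases j) auto
  finally have fact_dj: "fact (d + j) = 2 * real j * C * (real j * fact (j - 1))"
    unfolding C_def remove_j by simp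
  have "\<bar>real j ^ 2 - real k ^ 2\<bar> = \<bar>real j - real k\<bar> * (real j + real k)" for k
    unfolding power2_eq_square square_diff_square_factored abs_mult by simp
  then have "(\<Prod>k\<in>{1..d}-{j}. real k ^ 2 / \<bar>real j ^ 2 - real k ^ 2\<bar>)
      = A ^ 2 / ((\<Prod>k\<in>{1..d}-{j}. \<bar>real j - real k\<bar>) * C)"
    by (simp add: A_def C_def prod_dividef prod.distrib power2_eq_square)
  also have "\<dots> = 2 * fact d ^ 2 / (fact (d - j) * fact (d + j))"
    unfolding prod_abs_diff_atLeastAtMost_minus[OF j] fact_d fact_dj
    using j by (simp add: power2_eq_square)
  finally show ?thesis .
qed

lemma abs_lagrange_basis_squares_at_0_le:
  fixes c :: real
  assumes "j \<in> {1..d}" and "c \<noteq> 0"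
  shows "\<bar>\<Prod>k\<in>{1..d}-{j}. (0 - real k ^ 2 / c) / (real j ^ 2 / c - real k ^ 2 / c)\<bar> \<le> 2"
proof -
  have "(0 - real k ^ 2 / c) / (real j ^ 2 / c - real k ^ 2 / c) = - (real k ^ 2) / (real j ^ 2 - real k ^ 2)"
    for k using assms(2) by (simp add: diff_divide_distrib[symmetric])
  then have "\<bar>\<Prod>k\<in>{1..d}-{j}. (0 - real k ^ 2 / c) / (real j ^ 2 / c - real k ^ 2 / c)\<bar>
      = (\<Prod>k\<in>{1..d}-{j}. real k ^ 2 / \<bar>real j ^ 2 - real k ^ 2\<bar>)"
    by (simp only: abs_prod abs_divide abs_minus_cancel abs_power2 abs_of_nat)
  also have "\<dots> = 2 * fact d ^ 2 / (fact (d - j) * fact (d + j))"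
    by (rule prod_square_div_abs_diff_squares[OF assms(1)])
  also have "\<dots> \<le> 2"
  proof -
    have "real (fact d * fact d) \<le> real (fact (d - j) * fact (d + j))"
      using fact_sq_le_fact_mult_fact[of j d] assms(1) by (simp only: of_nat_le_iff atLeastAtMost_iff)
    then have "fact d ^ 2 \<le> (fact (d - j) * fact (d + j) :: real)"
      by (simp add: power2_eq_square)
    then show ?thesis
      by (simp add: divide_le_eq)
  qed
  finally show ?thesis .
qed

lemma abs_poly_0_le_of_square_nodes:
  fixes R :: "real poly"
  assumes "degree R < d" and "0 \<le> C"
    and nodes: "\<And>j. j \<in> {1..d} \<Longrightarrow>
      \<bar>poly R (real j ^ 2 / real d ^ 2)\<bar> \<le> C * real d ^ 2 / real j ^ 2"
  shows "\<bar>poly R 0\<bar> \<le> 4 * C * real d ^ 2"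
proof (cases "d = 0")
  case True
  then show ?thesis
    using assms(1) by simp
next
  case False
  define t where "t j = real j ^ 2 / real d ^ 2" for j :: nat
  have "inj_on t {1..d}"
    using False by (auto intro!: inj_onI simp: t_def)
  then have "poly R 0 = (\<Sum>j\<in>{1..d}. poly R (t j) * (\<Prod>k\<in>{1..d}-{j}. (0 - t k) / (t j - t k)))"
    using assms(1) by (intro lagrange_interpolation) auto
  also have "\<bar>\<dots>\<bar> \<le> (\<Sum>j\<in>{1..d}. C * real d ^ 2 / real j ^ 2 * 2)"
  proof (rule order_trans[OF sum_abs sum_mono])
    fix j assume j: "j \<in> {1..d}"
    have "\<bar>\<Prod>k\<in>{1..d}-{j}. (0 - t k) / (t j - t k)\<bar> \<le> 2"
      unfolding t_def using abs_lagrange_basis_squares_at_0_le[OF j] False by simp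
    then show "\<bar>poly R (t j) * (\<Prod>k\<in>{1..d}-{j}. (0 - t k) / (t j - t k))\<bar>
        \<le> C * real d ^ 2 / real j ^ 2 * 2"
      unfolding abs_mult t_def using nodes[OF j] \<open>0 \<le> C\<close> by (intro mult_mono) auto
  qed
  also have "\<dots> = 2 * C * real d ^ 2 * (\<Sum>j=1..d. 1 / real j ^ 2)"
    by (simp add: sum_distrib_left mult_ac)
  also have "\<dots> \<le> 2 * C * real d ^ 2 * 2"
    using sum_inverse_squares_le[of d] False \<open>0 \<le> C\<close>
    by (intro mult_left_mono) (auto intro: order_trans)
  finally show ?thesis
    by simp
qed

lemma markov_endpoint_bound:
  fixes P :: "real poly"
  assumes "degree P \<le> d"
    and bound: "\<And>\<sigma>. 0 \<le> \<sigma> \<Longrightarrow> \<sigma> \<le> 1 \<Longrightarrow> \<bar>poly P \<sigma>\<bar> \<le> B"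
  shows "\<bar>poly (pderiv P) 0\<bar> \<le> 8 * real d ^ 2 * B"
proof -
  define R where "R = synthetic_div P 0"
  have P_eq: "[:0, 1:] * R + [:poly P 0:] = P"
    using synthetic_div_correct'[of 0 P] by (simp add: R_def)
  have "poly (pderiv P) 0 = coeff ([:0, 1:] * R + [:poly P 0:]) 1"
    by (simp only: P_eq) (simp add: poly_0_coeff_0 coeff_pderiv)
  then have deriv_eq: "poly (pderiv P) 0 = poly R 0"
    by (simp add: poly_0_coeff_0)
  have R_bound: "\<bar>poly R \<sigma>\<bar> \<le> 2 * B / \<sigma>" if "0 < \<sigma>" "\<sigma> \<le> 1" for \<sigma>
  proof -
    have "poly P \<sigma> = poly ([:0, 1:] * R + [:poly P 0:]) \<sigma>"
      by (simp only: P_eq)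
    then have "\<sigma> * poly R \<sigma> = poly P \<sigma> - poly P 0"
      by simp
    also have "\<bar>\<dots>\<bar> \<le> 2 * B"
      using bound[of \<sigma>] bound[of 0] that by linarith
    finally show ?thesis
      using that by (simp add: abs_mult field_simps)
  qed
  have nodes: "\<bar>poly R (real j ^ 2 / real d ^ 2)\<bar> \<le> 2 * B * real d ^ 2 / real j ^ 2"
    if "j \<in> {1..d}" for j
  proof -
    have "0 < real j ^ 2 / real d ^ 2" "real j ^ 2 / real d ^ 2 \<le> 1"
      using that by (auto simp: power_mono)
    then have "\<bar>poly R (real j ^ 2 / real d ^ 2)\<bar> \<le> 2 * B / (real j ^ 2 / real d ^ 2)"
      by (rule R_bound)
    then show ?thesis
      by simp
  qed
  have "R = 0 \<or> degree R < d"
    using assms(1) by (cases "degree P = 0") (auto simp: R_def synthetic_div_eq_0_iff degree_synthetic_div)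
  then show ?thesis
    using abs_poly_0_le_of_square_nodes[of R d "2 * B", OF _ _ nodes] deriv_eq bound[of 0]
    by (auto simp: mult_ac)
qed

lemma poly_fun_deg_le_on_line:
  fixes f :: "real^'n \<Rightarrow> real"
  assumes "poly_fun_deg_le f d"
  obtains P where "degree P \<le> d" and "\<And>\<sigma>. f (x + \<sigma> *\<^sub>R u) = poly P \<sigma>"
proof -
  obtain c :: "('n \<Rightarrow> nat) \<Rightarrow> real" where fin: "finite {\<alpha>. c \<alpha> \<noteq> 0}"
    and deg: "\<And>\<alpha>. c \<alpha> \<noteq> 0 \<Longrightarrow> sum \<alpha> UNIV \<le> d"
    and f_eq: "\<And>y. f y = (\<Sum>\<alpha>\<in>{\<alpha>. c \<alpha> \<noteq> 0}. c \<alpha> * monom_eval \<alpha> y)"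
    using assms unfolding poly_fun_deg_le_def by blast
  define P where "P = (\<Sum>\<alpha>\<in>{\<alpha>. c \<alpha> \<noteq> 0}. smult (c \<alpha>) (\<Prod>i\<in>UNIV. [:x $ i, u $ i:] ^ \<alpha> i))"
  have "degree P \<le> d"
    unfolding P_def
  proof (intro degree_sum_le fin)
    fix \<alpha> assume "\<alpha> \<in> {\<alpha>. c \<alpha> \<noteq> 0}"
    have "degree (\<Prod>i\<in>UNIV. [:x $ i, u $ i:] ^ \<alpha> i) \<le> (\<Sum>i\<in>UNIV. degree ([:x $ i, u $ i:] ^ \<alpha> i))"
      using degree_prod_sum_le[of UNIV "\<lambda>i. [:x $ i, u $ i:] ^ \<alpha> i"] by (simp add: o_def)
    also have "\<dots> \<le> sum \<alpha> UNIV"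
      by (intro sum_mono order_trans[OF degree_power_le]) simp
    also have "\<dots> \<le> d"
      using deg \<open>\<alpha> \<in> {\<alpha>. c \<alpha> \<noteq> 0}\<close> by simp
    finally show "degree (smult (c \<alpha>) (\<Prod>i\<in>UNIV. [:x $ i, u $ i:] ^ \<alpha> i)) \<le> d"
      by (rule order_trans[OF degree_smult_le])
  qed
  moreover have "f (x + \<sigma> *\<^sub>R u) = poly P \<sigma>" for \<sigma>
    unfolding f_eq P_def monom_eval_def by (simp add: poly_sum poly_prod algebra_simps)
  ultimately show ?thesis
    using that by blast
qed

lemma poly_fun_deg_le_has_derivative:
  fixes f :: "real^'n \<Rightarrow> real"
  assumes "poly_fun_deg_le f d"
  obtains D where "(f has_derivative D) (at x)"
proof -
  obtain c :: "('n \<Rightarrow> nat) \<Rightarrow> real"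
    where "\<And>y. f y = (\<Sum>\<alpha>\<in>{\<alpha>. c \<alpha> \<noteq> 0}. c \<alpha> * (\<Prod>i\<in>UNIV. (y $ i) ^ \<alpha> i))"
    using assms unfolding poly_fun_deg_le_def monom_eval_def by blast
  then have "f = (\<lambda>y. \<Sum>\<alpha>\<in>{\<alpha>. c \<alpha> \<noteq> 0}. c \<alpha> * (\<Prod>i\<in>UNIV. (y $ i) ^ \<alpha> i))"
    by blast
  then have "\<exists>D. (f has_derivative D) (at x)"
    by (auto intro!: derivative_eq_intros bounded_linear_imp_has_derivative bounded_linear_vec_nth)
  then show ?thesis
    using that by blast
qed

lemma has_derivative_along_line:
  fixes f :: "'a::real_normed_vector \<Rightarrow> real"
  assumes "(f has_derivative D) (at (x + \<tau> *\<^sub>R w))"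
    and "\<And>\<sigma>. f (x + \<sigma> *\<^sub>R w) = poly P \<sigma>"
  shows "D w = poly (pderiv P) \<tau>"
proof -
  have "((\<lambda>\<sigma>. x + \<sigma> *\<^sub>R w) has_derivative (\<lambda>h. h *\<^sub>R w)) (at \<tau>)"
    by (auto intro!: derivative_eq_intros)
  from has_derivative_compose[OF this assms(1)]
  have "(poly P has_derivative (\<lambda>h. D (h *\<^sub>R w))) (at \<tau>)"
    using assms(2) by (simp add: o_def)
  moreover have "(poly P has_derivative (\<lambda>h. poly (pderiv P) \<tau> * h)) (at \<tau>)"
    using poly_DERIV[of P \<tau>] by (simp add: has_field_derivative_def)
  ultimately have "(\<lambda>h. D (h *\<^sub>R w)) = (\<lambda>h. poly (pderiv P) \<tau> * h)"
    by (rule has_derivative_unique)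
  from fun_cong[OF this, of 1] show ?thesis
    by simp
qed

lemma cube_eq_cbox: "cube = cbox (- 1) (1 :: real^'n)"
  by (auto simp: cube_def mem_box_cart abs_le_iff)

lemma cball_subset_cube: "cball 0 1 \<subseteq> (cube :: (real^'n) set)"
  using component_le_norm_cart order_trans by (fastforce simp: cube_def)

lemma segment_subset_cube:
  assumes "x \<in> cube" "y \<in> cube" "0 \<le> \<sigma>" "\<sigma> \<le> 1"
  shows "x + \<sigma> *\<^sub>R (y - x) \<in> cube"
proof -
  have "x + \<sigma> *\<^sub>R (y - x) = (1 - \<sigma>) *\<^sub>R x + \<sigma> *\<^sub>R y"
    by (simp add: algebra_simps)
  then show ?thesis
    using assms convex_box(1) unfolding cube_eq_cbox convex_alt by metis
qed

lemma poly_fun_derivative_bound_segment: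
  fixes f :: "real^'n \<Rightarrow> real"
  assumes "poly_fun_deg_le f d" and "(f has_derivative D) (at x)"
    and "\<And>\<sigma>. 0 \<le> \<sigma> \<Longrightarrow> \<sigma> \<le> 1 \<Longrightarrow> x + \<sigma> *\<^sub>R u \<in> cube"
    and "\<And>y. y \<in> cube \<Longrightarrow> \<bar>f y\<bar> \<le> M"
  shows "\<bar>D u\<bar> \<le> 8 * real d ^ 2 * M"
proof -
  obtain P where "degree P \<le> d" and P: "\<And>\<sigma>. f (x + \<sigma> *\<^sub>R u) = poly P \<sigma>"
    using poly_fun_deg_le_on_line[OF assms(1)] by blast
  moreover have "D u = poly (pderiv P) 0"
    using has_derivative_along_line[of f D x 0 u P] assms(2) P by simp
  moreover have "\<bar>poly P \<sigma>\<bar> \<le> M" if "0 \<le> \<sigma>" "\<sigma> \<le> 1" for \<sigma>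
    using assms(3,4) that P by metis
  ultimately show ?thesis
    using markov_endpoint_bound by metis
qed

lemma poly_fun_derivative_bound_cube:
  fixes f :: "real^'n \<Rightarrow> real"
  assumes "poly_fun_deg_le f d" and D: "(f has_derivative D) (at x)" and "x \<in> cube"
    and M: "\<And>y. y \<in> cube \<Longrightarrow> \<bar>f y\<bar> \<le> M"
  shows "\<bar>D w\<bar> \<le> 8 * real d ^ 2 * M * norm w"
proof (cases "w = 0")
  case True
  then show ?thesis
    using M[OF \<open>x \<in> cube\<close>] D by (simp add: linear_0 has_derivative_linear)
next
  case False
  define e where "e = w /\<^sub>R norm w"
  have "e \<in> cube" "- e \<in> cube"
    using cball_subset_cube False by (auto simp: e_def)
  have bound: "\<bar>D (v - x)\<bar> \<le> 8 * real d ^ 2 * M" if "v \<in> cube" for v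
    using segment_subset_cube[OF \<open>x \<in> cube\<close> that]
    by (intro poly_fun_derivative_bound_segment[OF assms(1) D _ M]) auto
  have lin: "linear D"
    using D by (rule has_derivative_linear)
  have "D (e - x) - D (- e - x) = D ((e - x) - (- e - x))"
    by (simp only: linear_diff[OF lin])
  also have "(e - x) - (- e - x) = 2 *\<^sub>R e"
    by (simp add: scaleR_2)
  finally have "D (e - x) - D (- e - x) = 2 * D e"
    by (simp add: linear_scale[OF lin])
  with bound[OF \<open>e \<in> cube\<close>] bound[OF \<open>- e \<in> cube\<close>]
  have De: "\<bar>D e\<bar> \<le> 8 * real d ^ 2 * M"
    by linarith
  have "\<bar>D w\<bar> = norm w * \<bar>D e\<bar>"
    using False by (simp add: e_def linear_scale[OF lin] abs_mult)
  also have "\<dots> \<le> norm w * (8 * real d ^ 2 * M)"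
    using De by (rule mult_left_mono) simp
  finally show ?thesis
    by (simp add: mult_ac)
qed

lemma poly_fun_lipschitz_on_cube:
  fixes f :: "real^'n \<Rightarrow> real"
  assumes f: "poly_fun_deg_le f d" and "x \<in> cube" "y \<in> cube"
    and M: "\<And>z. z \<in> cube \<Longrightarrow> \<bar>f z\<bar> \<le> M"
  shows "\<bar>f y - f x\<bar> \<le> 8 * real d ^ 2 * M * dist x y"
proof -
  obtain P where P: "\<And>\<sigma>. f (x + \<sigma> *\<^sub>R (y - x)) = poly P \<sigma>"
    using poly_fun_deg_le_on_line[OF f] by blast
  obtain \<tau> :: real where "0 < \<tau>" "\<tau> < 1" and mvt: "poly P 1 - poly P 0 = poly (pderiv P) \<tau>"
    using poly_MVT[of 0 1 P] by auto
  obtain D where D: "(f has_derivative D) (at (x + \<tau> *\<^sub>R (y - x)))"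
    using poly_fun_deg_le_has_derivative[OF f] by blast
  have "f y - f x = D (y - x)"
    using P[of 1] P[of 0] mvt has_derivative_along_line[OF D P] by simp
  also have "\<bar>\<dots>\<bar> \<le> 8 * real d ^ 2 * M * norm (y - x)"
    using segment_subset_cube[OF \<open>x \<in> cube\<close> \<open>y \<in> cube\<close>] \<open>0 < \<tau>\<close> \<open>\<tau> < 1\<close>
    by (intro poly_fun_derivative_bound_cube[OF f D _ M]) auto
  finally show ?thesis
    by (simp add: dist_norm norm_minus_commute)
qed

lemma poly_fun_continuous:
  fixes f :: "real^'n \<Rightarrow> real"
  assumes "poly_fun_deg_le f d"
  shows "continuous_on A f"
  by (metis assms continuous_at_imp_continuous_on has_derivative_continuous
      poly_fun_deg_le_has_derivative)

lemma abs_le_supnorm: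
  fixes h :: "real^'n \<Rightarrow> real"
  assumes "continuous_on cube h" and "x \<in> cube"
  shows "\<bar>h x\<bar> \<le> supnorm h"
proof -
  have "compact ((\<lambda>x. \<bar>h x\<bar>) ` cube)"
    using assms(1) by (intro compact_continuous_image continuous_intros) (simp_all add: cube_eq_cbox)
  then have "bdd_above ((\<lambda>x. \<bar>h x\<bar>) ` cube)"
    by (intro bounded_imp_bdd_above compact_imp_bounded)
  then show ?thesis
    unfolding supnorm_def using assms(2) by (rule cSUP_upper2) simp
qed

lemma is_sos_nonneg: "is_sos s \<Longrightarrow> 0 \<le> s x"
  unfolding is_sos_def by (auto intro!: sum_list_nonneg)

lemma semialg_subset_cball:
  assumes "in_qmodule g r (\<lambda>x. 1 - (norm x)^2)"
  shows "semialg g r \<subseteq> cball 0 1"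
proof
  fix x assume x: "x \<in> semialg g r"
  obtain \<sigma> where sos: "\<And>i. i \<in> {0..r} \<Longrightarrow> is_sos (\<sigma> i)"
    and eq: "1 - (norm x)^2 = \<sigma> 0 x + (\<Sum>i=1..r. \<sigma> i x * g i x)"
    using assms unfolding in_qmodule_def by blast
  have "0 \<le> \<sigma> i x" if "i \<in> {0..r}" for i
    using sos[OF that] by (rule is_sos_nonneg)
  then have "0 \<le> \<sigma> 0 x + (\<Sum>i=1..r. \<sigma> i x * g i x)"
    using x unfolding semialg_def by (intro add_nonneg_nonneg sum_nonneg mult_nonneg_nonneg) auto
  then have "(norm x)^2 \<le> 1"
    using eq by linarith
  then show "x \<in> cball 0 1"
    by (simp add: power_le_one_iff)
qed

lemma infdist_le_hausdorff_dist:
  assumes "a \<in> A" and "bounded A" and "B \<noteq> {}"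
  shows "infdist a B \<le> hausdorff_dist A B"
proof -
  obtain b where "b \<in> B"
    using assms(3) by blast
  obtain e where e: "\<And>a. a \<in> A \<Longrightarrow> dist b a \<le> e"
    using assms(2) unfolding bounded_any_center[of _ b] by blast
  have "infdist a B \<le> e" if "a \<in> A" for a
    using infdist_le[OF \<open>b \<in> B\<close>, of a] e[OF that] by (simp add: dist_commute)
  then have "infdist a B \<le> (SUP a\<in>A. infdist a B)"
    using assms(1) by (intro cSUP_upper bdd_aboveI2) auto
  then show ?thesis
    unfolding hausdorff_dist_def by simp
qed

theorem mainTheorem7:
  fixes g :: "nat \<Rightarrow> real^'n \<Rightarrow> real" and r :: nat
    and f :: "real^'n \<Rightarrow> real" and d :: nat
  assumes g_poly: "\<forall>i\<in>{1..r}. is_poly (g i)"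
    and archim: "in_qmodule g r (\<lambda>x. 1 - (norm x)^2)"
    and g_small: "\<forall>i\<in>{1..r}. supnorm (g i) \<le> 1/2"
    and S_ne: "semialg g r \<noteq> {}"
    and f_poly: "is_poly f"
    and f_deg: "poly_degree f = d"
    and fstar_pos: "Inf (f ` semialg g r) > 0"
    and neg: "\<exists>x\<in>cube - semialg g r. f x \<le> 0"
  shows "hausdorff_dist {x\<in>cube. f x \<le> 3 * Inf (f ` semialg g r) / 4} (semialg g r)
           \<ge> (Inf (f ` semialg g r) / supnorm f) / (8 * real d ^ 2)"
proof -
  define S where "S = semialg g r"
  define fstar where "fstar = Inf (f ` S)"
  define K where "K = 8 * real d ^ 2 * supnorm f"
  have f: "poly_fun_deg_le f d"
    using f_poly f_deg unfolding is_poly_def poly_degree_def by (metis LeastI_ex)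
  have f_bound: "\<bar>f z\<bar> \<le> supnorm f" if "z \<in> cube" for z
    using abs_le_supnorm[OF poly_fun_continuous[OF f] that] .
  have S_cube: "S \<subseteq> cube"
    using semialg_subset_cball[OF archim] cball_subset_cube unfolding S_def by blast
  have S_ne': "S \<noteq> {}" and fstar_pos': "0 < fstar"
    using S_ne fstar_pos by (simp_all add: S_def fstar_def)
  have bdd: "bdd_below (f ` S)"
    using S_cube f_bound by (intro bdd_belowI2[of _ "- supnorm f"]) force
  obtain x0 where x0: "x0 \<in> cube" "f x0 \<le> 0"
    using neg by blast
  have fstar_le: "fstar \<le> K * dist x0 s" if "s \<in> S" for s
  proof -
    have "fstar \<le> f s"
      unfolding fstar_def using that bdd by (intro cInf_lower) auto
    also have "\<dots> \<le> \<bar>f s - f x0\<bar>"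
      using x0(2) by simp
    also have "\<dots> \<le> K * dist x0 s"
      unfolding K_def using poly_fun_lipschitz_on_cube[OF f x0(1) _ f_bound] that S_cube by blast
    finally show ?thesis .
  qed
  obtain s0 where "s0 \<in> S"
    using S_ne' by blast
  then have "0 < K * dist x0 s0"
    using fstar_le fstar_pos' by fastforce
  then have "0 < K"
    by (simp add: zero_less_mult_iff)
  then have dist_ge: "fstar / K \<le> dist x0 s" if "s \<in> S" for s
    using fstar_le[OF that] by (simp add: divide_le_eq mult.commute)
  have "(fstar / supnorm f) / (8 * real d ^ 2) = fstar / K"
    by (simp add: K_def mult.commute)
  also have "\<dots> \<le> infdist x0 S"
    unfolding infdist_notempty[OF S_ne'] by (rule cINF_greatest[OF S_ne' dist_ge])
  also have "\<dots> \<le> hausdorff_dist {x\<in>cube. f x \<le> 3 * fstar / 4} S"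
  proof (rule infdist_le_hausdorff_dist[OF _ _ S_ne'])
    show "x0 \<in> {x\<in>cube. f x \<le> 3 * fstar / 4}"
      using x0 fstar_pos' by simp
    show "bounded {x\<in>cube. f x \<le> 3 * fstar / 4}"
      by (rule bounded_subset[of cube]) (auto simp: cube_eq_cbox)
  qed
  finally show ?thesis
    unfolding S_def fstar_def .
qed

end
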